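(* Let $U,V\in U(n-1)$ and $(\tau,t),(\sigma,s)\in\mathfrak{N}_n$. Let $T=R_UT_{(\tau,t)}$ and $S=R_VT_{(\sigma,s)}$. Then $S$ commutes with $T$ if and only if $VU=UV$ and $(V^*\tau,t)(\sigma,s)=(U^*\sigma,s)(\tau,t)$ in $\mathfrak{N}_n$.
   Context: The Heisenberg group $\mathfrak{N}_n$ is $\mathbb{C}^{n-1}\times\mathbb{R}$ with product $(\zeta_1,v_1)(\zeta_2,v_2)=(\zeta_1+\zeta_2,\,v_1+v_2+2\,\mathrm{Im}(\zeta_2^*\zeta_1))$. Work in $U(n,1)$ defined as the group of $(n+1)\times(n+1)$ complex matrices $g$ with $g^*Jg=J$, where $J=\begin{pmatrix}0&0&1\\0&I_{n-1}&0\\1&0&0\end{pmatrix}$. For $U\in U(n-1)$, $R_U=\mathrm{diag}(1,U,1)$ (Heisenberg rotation), and for $(\tau,t)\in\mathfrak{N}_n$, $T_{(\tau,t)}=\begin{pmatrix}1&-\tau^*&\frac{-|\tau|^2+ti}{2}\\0&I_{n-1}&\tau\\0&0&1\end{pmatrix}$ (Heisenberg translation). *)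

theory Defs
  imports Complex_Main "Jordan_Normal_Form.Matrix"
begin

text \<open>Throughout, m = n - 1 is the complex dimension of the Heisenberg group,
  so matrices in U(n,1) are (m+2) x (m+2), indexed 0..m+1.\<close>

definition ctrans :: "complex mat \<Rightarrow> complex mat" where
  "ctrans A = mat (dim_col A) (dim_row A) (\<lambda>(i,j). cnj (A $$ (j,i)))"

definition unitary_mat :: "nat \<Rightarrow> complex mat \<Rightarrow> bool" where
  "unitary_mat m U \<longleftrightarrow> U \<in> carrier_mat m m \<and> ctrans U * U = 1\<^sub>m m"

definition herm :: "complex vec \<Rightarrow> complex vec \<Rightarrow> complex" where
  "herm \<zeta>2 \<zeta>1 = (\<Sum>k<dim_vec \<zeta>1. cnj (\<zeta>2 $ k) * \<zeta>1 $ k)"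

definition heis_mult :: "complex vec \<times> real \<Rightarrow> complex vec \<times> real \<Rightarrow> complex vec \<times> real" where
  "heis_mult p q = (case p of (\<zeta>1, v1) \<Rightarrow> case q of (\<zeta>2, v2) \<Rightarrow>
      (\<zeta>1 + \<zeta>2, v1 + v2 + 2 * Im (herm \<zeta>2 \<zeta>1)))"

definition heis_rot :: "nat \<Rightarrow> complex mat \<Rightarrow> complex mat" where
  "heis_rot m U = mat (m+2) (m+2) (\<lambda>(i,j).
      if i = 0 \<or> i = m+1 then (if j = i then 1 else 0)
      else if j = 0 \<or> j = m+1 then 0
      else U $$ (i-1, j-1))"

definition heis_trans :: "nat \<Rightarrow> complex vec \<Rightarrow> real \<Rightarrow> complex mat" where
  "heis_trans m \<tau> t = mat (m+2) (m+2) (\<lambda>(i,j).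
      if i = 0 then
        (if j = 0 then 1
         else if j = m+1 then (- complex_of_real ((\<Sum>k<m. (cmod (\<tau> $ k))\<^sup>2)) + complex_of_real t * \<i>) / 2
         else - cnj (\<tau> $ (j-1)))
      else if i = m+1 then (if j = m+1 then 1 else 0)
      else if j = m+1 then \<tau> $ (i-1)
      else if j = i then 1 else 0)"

end

theory Submission
  imports Defs "Jordan_Normal_Form.Determinant"
begin

text \<open>Both R_U T_(tau,t) and R_V T_(sigma,s) are block upper triangular matrices
  [[1, r, a], [0, W, w], [0, 0, 1]], a shape closed under multiplication. Comparing the blocks
  of S T and T S shows that commutation means: the unitary parts commute, the first components
  of the two Heisenberg products agree, the corner entries agree, and the last columns agree.
  The corner condition is a Hermitian product identity whose imaginary part is exactly the
  equality of the real coordinates of the two Heisenberg products. The remaining conditions follow from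
  the first two by unitarity: the last column condition is the first-component equation
  multiplied by UV, and the real part of the corner identity drops out of comparing the squared
  norms of both sides of the first-component equation.\<close>

definition heis_block ::
    "nat \<Rightarrow> complex \<Rightarrow> complex vec \<Rightarrow> complex mat \<Rightarrow> complex vec \<Rightarrow> complex mat" where
  "heis_block m a r W w = mat (m+2) (m+2) (\<lambda>(i,j).
      if i = 0 then (if j = 0 then 1 else if j = m+1 then a else r $ (j-1))
      else if i = m+1 then (if j = m+1 then 1 else 0)
      else if j = 0 then 0 else if j = m+1 then w $ (i-1) else W $$ (i-1, j-1))"

lemma dim_heis_block [simp]:
  "dim_row (heis_block m a r W w) = Suc (Suc m)"
  "dim_col (heis_block m a r W w) = Suc (Suc m)"
  by (auto simp: heis_block_def)

lemma index_heis_block [simp]: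
  "heis_block m a r W w $$ (0, 0) = 1"
  "l < m \<Longrightarrow> heis_block m a r W w $$ (0, Suc l) = r $ l"
  "heis_block m a r W w $$ (0, Suc m) = a"
  "k < m \<Longrightarrow> heis_block m a r W w $$ (Suc k, 0) = 0"
  "k < m \<Longrightarrow> l < m \<Longrightarrow> heis_block m a r W w $$ (Suc k, Suc l) = W $$ (k, l)"
  "k < m \<Longrightarrow> heis_block m a r W w $$ (Suc k, Suc m) = w $ k"
  "heis_block m a r W w $$ (Suc m, 0) = 0"
  "l < m \<Longrightarrow> heis_block m a r W w $$ (Suc m, Suc l) = 0"
  "heis_block m a r W w $$ (Suc m, Suc m) = 1"
  by (auto simp: heis_block_def)

lemma less_Suc_Suc_cases:
  assumes "i < Suc (Suc m)"
  obtains "i = 0" | "i = Suc m" | k where "i = Suc k" "k < m"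
  using assms by (cases i) (auto simp: less_Suc_eq)

lemma sum_lessThan_Suc_Suc_split:
  "(\<Sum>k<Suc (Suc m). f k) = f 0 + (\<Sum>k<m. f (Suc k)) + (f (Suc m) :: 'a :: comm_monoid_add)"
  by (simp only: sum.lessThan_Suc[of f "Suc m"] sum.lessThan_Suc_shift[of f m])

lemma heis_block_mult:
  assumes "W \<in> carrier_mat m m" "X \<in> carrier_mat m m"
    and "r \<in> carrier_vec m" "q \<in> carrier_vec m" "w \<in> carrier_vec m" "x \<in> carrier_vec m"
  shows "heis_block m a r W w * heis_block m b q X x =
    heis_block m (b + r \<bullet> x + a) (q + transpose_mat X *\<^sub>v r) (W * X) (W *\<^sub>v x + w)"
    (is "?A * ?B = ?C")
proof (rule eq_matI)
  fix i j assume "i < dim_row ?C" "j < dim_col ?C"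
  then have i: "i < Suc (Suc m)" and j: "j < Suc (Suc m)" by auto
  then have "(?A * ?B) $$ (i, j) = (\<Sum>k<Suc (Suc m). ?A $$ (i, k) * ?B $$ (k, j))"
    by (simp add: scalar_prod_def atLeast0LessThan)
  also have "\<dots> = ?C $$ (i, j)"
    unfolding sum_lessThan_Suc_Suc_split
    by (rule less_Suc_Suc_cases[OF i]; rule less_Suc_Suc_cases[OF j])
      (use assms in \<open>simp_all add: mult_mat_vec_def scalar_prod_def atLeast0LessThan mult.commute\<close>)
  finally show "(?A * ?B) $$ (i, j) = ?C $$ (i, j)" .
qed auto

lemma heis_block_eq_iff:
  assumes "W \<in> carrier_mat m m" "W' \<in> carrier_mat m m"
    and "r \<in> carrier_vec m" "r' \<in> carrier_vec m" "w \<in> carrier_vec m" "w' \<in> carrier_vec m"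
  shows "heis_block m a r W w = heis_block m a' r' W' w' \<longleftrightarrow>
    a = a' \<and> r = r' \<and> W = W' \<and> w = w'"
proof (intro iffI conjI)
  assume eq: "heis_block m a r W w = heis_block m a' r' W' w'"
  note entry = arg_cong[OF eq, of "\<lambda>M. M $$ _"]
  show "a = a'" using entry[of "(0, Suc m)"] by simp
  show "r = r'"
  proof (rule eq_vecI)
    fix l assume "l < dim_vec r'"
    then show "r $ l = r' $ l" using assms entry[of "(0, Suc l)"] by simp
  qed (use assms in simp)
  show "w = w'"
  proof (rule eq_vecI)
    fix k assume "k < dim_vec w'"
    then show "w $ k = w' $ k" using assms entry[of "(Suc k, Suc m)"] by simp
  qed (use assms in simp)
  show "W = W'"
  proof (rule eq_matI)
    fix k l assume "k < dim_row W'" "l < dim_col W'"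
    then show "W $$ (k, l) = W' $$ (k, l)" using assms entry[of "(Suc k, Suc l)"] by simp
  qed (use assms in simp_all)
qed simp

lemma herm_add_left:
  "dim_vec a = dim_vec c \<Longrightarrow> dim_vec b = dim_vec c \<Longrightarrow> herm (a + b) c = herm a c + herm b c"
  by (simp add: herm_def sum.distrib distrib_right)

lemma herm_add_right: "dim_vec b = dim_vec c \<Longrightarrow> herm a (b + c) = herm a b + herm a c"
  by (simp add: herm_def sum.distrib distrib_left)

lemma herm_commute: "dim_vec a = dim_vec b \<Longrightarrow> herm a b = cnj (herm b a)"
  by (simp add: herm_def mult.commute)

lemma herm_conv_scalar_prod: "dim_vec a = dim_vec b \<Longrightarrow> herm a b = conjugate a \<bullet> b"
  by (simp add: herm_def scalar_prod_def atLeast0LessThan)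

lemma herm_add_self:
  assumes "dim_vec a = dim_vec b"
  shows "herm (a + b) (a + b) = herm a a + herm b b + 2 * Re (herm b a)"
proof -
  have "herm (a + b) (a + b) = herm a a + herm a b + (herm b a + herm b b)"
    using assms by (simp add: herm_add_left herm_add_right)
  also have "herm a b = cnj (herm b a)"
    using assms by (rule herm_commute)
  finally show ?thesis
    by (simp add: complex_add_cnj algebra_simps)
qed

lemma dim_ctrans [simp]: "dim_row (ctrans A) = dim_col A" "dim_col (ctrans A) = dim_row A"
  by (simp_all add: ctrans_def)

lemma carrier_ctrans [simp]: "A \<in> carrier_mat n k \<Longrightarrow> ctrans A \<in> carrier_mat k n"
  by auto

lemma carrier_ctrans_mult_vec [simp]: "A \<in> carrier_mat n k \<Longrightarrow> ctrans A *\<^sub>v v \<in> carrier_vec k"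
  by (auto simp: ctrans_def intro!: carrier_vecI)

lemma herm_mult_mat_vec_right:
  assumes "A \<in> carrier_mat n k" "a \<in> carrier_vec n" "b \<in> carrier_vec k"
  shows "herm a (A *\<^sub>v b) = herm (ctrans A *\<^sub>v a) b"
proof -
  have "herm a (A *\<^sub>v b) = (\<Sum>i<n. \<Sum>j<k. cnj (a $ i) * (A $$ (i, j) * b $ j))"
    using assms
    by (simp add: herm_def mult_mat_vec_def scalar_prod_def atLeast0LessThan sum_distrib_left)
  also have "\<dots> = (\<Sum>j<k. \<Sum>i<n. cnj (a $ i) * (A $$ (i, j) * b $ j))"
    by (rule sum.swap)
  also have "\<dots> = herm (ctrans A *\<^sub>v a) b"
    using assms by (simp add: herm_def mult_mat_vec_def ctrans_def scalar_prod_def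
        atLeast0LessThan sum_distrib_left sum_distrib_right ac_simps)
  finally show ?thesis .
qed

lemma conjugate_scalar_prod_mult_mat_vec:
  assumes "A \<in> carrier_mat n k" "a \<in> carrier_vec n" "b \<in> carrier_vec k"
  shows "conjugate a \<bullet> (A *\<^sub>v b) = cnj (herm b (ctrans A *\<^sub>v a))"
proof -
  have "conjugate a \<bullet> (A *\<^sub>v b) = herm a (A *\<^sub>v b)"
    using assms by (simp add: herm_conv_scalar_prod)
  also have "\<dots> = herm (ctrans A *\<^sub>v a) b"
    using assms by (rule herm_mult_mat_vec_right)
  also have "\<dots> = cnj (herm b (ctrans A *\<^sub>v a))"
    using assms by (intro herm_commute) simp
  finally show ?thesis .
qed

lemma neg_conjugate_add_transpose_mult:
  assumes "A \<in> carrier_mat n n" "a \<in> carrier_vec n" "b \<in> carrier_vec n"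
  shows "- conjugate b + transpose_mat A *\<^sub>v (- conjugate a) = - conjugate (ctrans A *\<^sub>v a + b)"
  using assms
  by (intro eq_vecI) (auto simp: mult_mat_vec_def ctrans_def scalar_prod_def sum_negf mult.commute)

lemma unitary_mat_mult_ctrans: "unitary_mat m U \<Longrightarrow> U * ctrans U = 1\<^sub>m m"
  unfolding unitary_mat_def by (intro mat_mult_left_right_inverse[of "ctrans U" m]) auto

lemma unitary_mult_ctrans_vec:
  assumes "unitary_mat m U" "v \<in> carrier_vec m"
  shows "U *\<^sub>v (ctrans U *\<^sub>v v) = v"
proof -
  have "U \<in> carrier_mat m m" using assms(1) by (simp add: unitary_mat_def)
  then have "U *\<^sub>v (ctrans U *\<^sub>v v) = (U * ctrans U) *\<^sub>v v"
    using assms(2) by (simp add: assoc_mult_mat_vec[of U m m "ctrans U" m v])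
  then show ?thesis
    using assms by (simp add: unitary_mat_mult_ctrans)
qed

lemma herm_ctrans_unitary:
  assumes "unitary_mat m U" "a \<in> carrier_vec m" "b \<in> carrier_vec m"
  shows "herm (ctrans U *\<^sub>v a) (ctrans U *\<^sub>v b) = herm a b"
proof -
  have U: "U \<in> carrier_mat m m" using assms(1) by (simp add: unitary_mat_def)
  have "herm a (U *\<^sub>v (ctrans U *\<^sub>v b)) = herm (ctrans U *\<^sub>v a) (ctrans U *\<^sub>v b)"
    using U assms(2) by (intro herm_mult_mat_vec_right) auto
  then show ?thesis
    using assms by (simp add: unitary_mult_ctrans_vec)
qed

lemma heis_rot_eq_block: "U \<in> carrier_mat m m \<Longrightarrow> heis_rot m U = heis_block m 0 (0\<^sub>v m) U (0\<^sub>v m)"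
  by (rule eq_matI) (auto simp: heis_rot_def heis_block_def)

text \<open>The corner entry is left abstract: it cancels when S T is compared with T S.\<close>

lemma heis_trans_eq_block:
  assumes "\<tau> \<in> carrier_vec m"
  obtains a where "heis_trans m \<tau> t = heis_block m a (- conjugate \<tau>) (1\<^sub>m m) \<tau>"
proof
  show "heis_trans m \<tau> t = heis_block m
      ((- complex_of_real (\<Sum>k<m. (cmod (\<tau> $ k))\<^sup>2) + complex_of_real t * \<i>) / 2)
      (- conjugate \<tau>) (1\<^sub>m m) \<tau>"
    using assms by (intro eq_matI) (auto simp: heis_trans_def heis_block_def)
qed

lemma heis_rot_trans_eq_block:
  assumes "U \<in> carrier_mat m m" "\<tau> \<in> carrier_vec m"
  obtains a where "heis_rot m U * heis_trans m \<tau> t = heis_block m a (- conjugate \<tau>) U (U *\<^sub>v \<tau>)"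
proof -
  obtain a where "heis_trans m \<tau> t = heis_block m a (- conjugate \<tau>) (1\<^sub>m m) \<tau>"
    using assms(2) by (rule heis_trans_eq_block)
  with assms that show thesis
    by (simp add: heis_rot_eq_block heis_block_mult)
qed

lemma heis_rot_trans_commute_iff:
  fixes t s :: real
  assumes U: "U \<in> carrier_mat m m" and V: "V \<in> carrier_mat m m"
    and \<tau>: "\<tau> \<in> carrier_vec m" and \<sigma>: "\<sigma> \<in> carrier_vec m"
  defines "T \<equiv> heis_rot m U * heis_trans m \<tau> t" and "S \<equiv> heis_rot m V * heis_trans m \<sigma> s"
  shows "S * T = T * S \<longleftrightarrow>
    V * U = U * V \<and> ctrans V *\<^sub>v \<tau> + \<sigma> = ctrans U *\<^sub>v \<sigma> + \<tau> \<and>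
    herm \<sigma> (ctrans V *\<^sub>v \<tau>) = herm \<tau> (ctrans U *\<^sub>v \<sigma>) \<and>
    V *\<^sub>v (U *\<^sub>v \<tau>) + V *\<^sub>v \<sigma> = U *\<^sub>v (V *\<^sub>v \<sigma>) + U *\<^sub>v \<tau>"
proof -
  obtain a where T: "T = heis_block m a (- conjugate \<tau>) U (U *\<^sub>v \<tau>)"
    unfolding T_def using U \<tau> by (rule heis_rot_trans_eq_block)
  obtain b where S: "S = heis_block m b (- conjugate \<sigma>) V (V *\<^sub>v \<sigma>)"
    unfolding S_def using V \<sigma> by (rule heis_rot_trans_eq_block)
  have ST: "S * T = heis_block m (a + - cnj (herm \<tau> (ctrans U *\<^sub>v \<sigma>)) + b)
      (- conjugate (ctrans U *\<^sub>v \<sigma> + \<tau>)) (V * U) (V *\<^sub>v (U *\<^sub>v \<tau>) + V *\<^sub>v \<sigma>)"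
    using U V \<tau> \<sigma> by (simp add: S T heis_block_mult conjugate_scalar_prod_mult_mat_vec
        neg_conjugate_add_transpose_mult)
  have TS: "T * S = heis_block m (b + - cnj (herm \<sigma> (ctrans V *\<^sub>v \<tau>)) + a)
      (- conjugate (ctrans V *\<^sub>v \<tau> + \<sigma>)) (U * V) (U *\<^sub>v (V *\<^sub>v \<sigma>) + U *\<^sub>v \<tau>)"
    using U V \<tau> \<sigma> by (simp add: S T heis_block_mult conjugate_scalar_prod_mult_mat_vec
        neg_conjugate_add_transpose_mult)
  show ?thesis
    unfolding ST TS using U V \<tau> \<sigma>
    by (subst heis_block_eq_iff) (auto simp: conjugate_cancel_iff)
qed

lemma re_herm_eq_of_add_eq:
  assumes "p \<in> carrier_vec m" "q \<in> carrier_vec m" "\<tau> \<in> carrier_vec m" "\<sigma> \<in> carrier_vec m"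
    and "q + \<sigma> = p + \<tau>" and "herm p p = herm \<sigma> \<sigma>" and "herm q q = herm \<tau> \<tau>"
  shows "Re (herm \<sigma> q) = Re (herm \<tau> p)"
proof -
  have "herm (q + \<sigma>) (q + \<sigma>) = herm \<tau> \<tau> + herm \<sigma> \<sigma> + 2 * Re (herm \<sigma> q)"
    using herm_add_self[of q \<sigma>] assms(2,4,7) by simp
  moreover have "herm (p + \<tau>) (p + \<tau>) = herm \<sigma> \<sigma> + herm \<tau> \<tau> + 2 * Re (herm \<tau> p)"
    using herm_add_self[of p \<tau>] assms(1,3,6) by simp
  ultimately have "complex_of_real (Re (herm \<sigma> q)) = complex_of_real (Re (herm \<tau> p))"
    using assms(5) by simp
  then show ?thesis
    by (rule of_real_eq_iff[THEN iffD1])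
qed

lemma commuting_unitaries_mult_add_eq:
  assumes U: "unitary_mat m U" and V: "unitary_mat m V"
    and \<tau>: "\<tau> \<in> carrier_vec m" and \<sigma>: "\<sigma> \<in> carrier_vec m"
    and UV: "V * U = U * V" and eq: "ctrans V *\<^sub>v \<tau> + \<sigma> = ctrans U *\<^sub>v \<sigma> + \<tau>"
  shows "V *\<^sub>v (U *\<^sub>v \<tau>) + V *\<^sub>v \<sigma> = U *\<^sub>v (V *\<^sub>v \<sigma>) + U *\<^sub>v \<tau>"
proof -
  have Uc: "U \<in> carrier_mat m m" and Vc: "V \<in> carrier_mat m m"
    using U V by (auto simp: unitary_mat_def)
  have "U *\<^sub>v \<tau> + U *\<^sub>v (V *\<^sub>v \<sigma>) = U *\<^sub>v (V *\<^sub>v (ctrans V *\<^sub>v \<tau>)) + U *\<^sub>v (V *\<^sub>v \<sigma>)"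
    using V \<tau> by (simp add: unitary_mult_ctrans_vec)
  also have "\<dots> = (U * V) *\<^sub>v (ctrans V *\<^sub>v \<tau> + \<sigma>)"
    using Uc Vc \<tau> \<sigma> by (simp add: mult_add_distrib_mat_vec[of _ m m])
  also have "\<dots> = (V * U) *\<^sub>v (ctrans U *\<^sub>v \<sigma> + \<tau>)"
    using eq UV by simp
  also have "\<dots> = V *\<^sub>v (U *\<^sub>v (ctrans U *\<^sub>v \<sigma>)) + V *\<^sub>v (U *\<^sub>v \<tau>)"
    using Uc Vc \<tau> \<sigma> by (simp add: mult_add_distrib_mat_vec[of _ m m])
  also have "\<dots> = V *\<^sub>v \<sigma> + V *\<^sub>v (U *\<^sub>v \<tau>)"
    using U \<sigma> by (simp add: unitary_mult_ctrans_vec)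
  finally show ?thesis
    using Uc Vc \<tau> \<sigma> by (simp add: comm_add_vec[of _ m])
qed

theorem lemma3p2:
  fixes m :: nat and U V :: "complex mat" and \<tau> \<sigma> :: "complex vec" and t s :: real
  assumes "unitary_mat m U" and "unitary_mat m V"
    and "\<tau> \<in> carrier_vec m" and "\<sigma> \<in> carrier_vec m"
  defines "T \<equiv> heis_rot m U * heis_trans m \<tau> t"
    and "S \<equiv> heis_rot m V * heis_trans m \<sigma> s"
  shows "S * T = T * S \<longleftrightarrow>
    (V * U = U * V \<and>
     heis_mult (ctrans V *\<^sub>v \<tau>, t) (\<sigma>, s) = heis_mult (ctrans U *\<^sub>v \<sigma>, s) (\<tau>, t))"
proof -
  have U: "U \<in> carrier_mat m m" and V: "V \<in> carrier_mat m m"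
    using assms(1,2) by (auto simp: unitary_mat_def)
  have "heis_mult (ctrans V *\<^sub>v \<tau>, t) (\<sigma>, s) = heis_mult (ctrans U *\<^sub>v \<sigma>, s) (\<tau>, t) \<longleftrightarrow>
      ctrans V *\<^sub>v \<tau> + \<sigma> = ctrans U *\<^sub>v \<sigma> + \<tau> \<and>
      Im (herm \<sigma> (ctrans V *\<^sub>v \<tau>)) = Im (herm \<tau> (ctrans U *\<^sub>v \<sigma>))"
    by (auto simp: heis_mult_def)
  moreover have "Re (herm \<sigma> (ctrans V *\<^sub>v \<tau>)) = Re (herm \<tau> (ctrans U *\<^sub>v \<sigma>))"
    if "ctrans V *\<^sub>v \<tau> + \<sigma> = ctrans U *\<^sub>v \<sigma> + \<tau>"
    using U V assms(1-4) that
    by (intro re_herm_eq_of_add_eq[of _ m]) (simp_all add: herm_ctrans_unitary)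
  moreover note commuting_unitaries_mult_add_eq[OF assms(1-4)]
  ultimately show ?thesis
    unfolding S_def T_def heis_rot_trans_commute_iff[OF U V assms(3,4)]
    by (auto simp: complex_eq_iff)
qed

end
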